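(* Let $N=2$, $\alpha\in(0,1)$, and suppose both bidders have the equal revenue distribution $F(v)=1-\frac{\alpha}{v}$ for $\alpha\le v<1$ and $F(1)=1$ (so $F(v)=0$ for $v<\alpha$ and $F$ has mass $\alpha$ at $1$). Then the Second Price Auction with Uniformly Distributed Reserves is a maxmin auction among DSIC and EPIR mechanisms, and the independent joint distribution $F\times F$ is a minimax correlation structure: together they form a saddle point, i.e. $U(M^*,\pi)\ge U(M^*,F\times F)\ge U(M,F\times F)$ for all $\pi\in\Pi(F)$ and all DSIC and EPIR mechanisms $M$, where $M^*$ is the Second Price Auction with Uniformly Distributed Reserves.
   Context: A single indivisible good is sold to two bidders with private values $v_1,v_2\in[0,1]$, each with marginal cdf $F$. $\Pi(F)$ is the set of probability measures on $[0,1]^2$ with both marginals $F$. A mechanism $(q,t)$: $q:[0,1]^2\to[0,1]^2$ with $q_1+q_2\le1$, $t:[0,1]^2\to\mathbb{R}^2$; DSIC: $v_iq_i(v)-t_i(v)\ge v_iq_i(v_i',v_{-i})-t_i(v_i',v_{-i})$ for all $i,v,v_i'$; EPIR: $v_iq_i(v)-t_i(v)\ge0$. $U((q,t),\pi)=\int(t_1+t_2)\,d\pi$; a maxmin auction maximizes $\inf_{\pi\in\Pi(F)}U((q,t),\pi)$ over DSIC and EPIR mechanisms. Second Price Auction with Uniformly Distributed Reserves: if $v_1>v_2$, $q_1=v_1$, $q_2=0$, $t_1=\frac{v_1^2+v_2^2}2$, $t_2=0$ (symmetrically if $v_2>v_1$); if $v_1=v_2=v$, $q_1=q_2=\frac v2$,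 $t_1=t_2=\frac{v^2}2$. *)

theory Defs
  imports "HOL-Probability.Probability"
begin

text \<open>Values v = (v1, v2) in [0,1]^2. A mechanism is a pair (q, t) of maps
  from value profiles to allocation pairs (q1, q2) and payment pairs (t1, t2).\<close>

type_synonym mechanism = "(real \<times> real \<Rightarrow> real \<times> real) \<times> (real \<times> real \<Rightarrow> real \<times> real)"

definition box01 :: "(real \<times> real) set" where
  "box01 = {0..1} \<times> {0..1}"

definition Fcdf :: "real \<Rightarrow> real \<Rightarrow> real" where
  "Fcdf \<alpha> v = (if v < \<alpha> then 0 else if v < 1 then 1 - \<alpha> / v else 1)"

definition Fmeas :: "real \<Rightarrow> real measure" where
  "Fmeas \<alpha> = interval_measure (Fcdf \<alpha>)"

definition PiF :: "real \<Rightarrow> (real \<times> real) measure set" where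
  "PiF \<alpha> = {\<pi>. prob_space \<pi> \<and> sets \<pi> = sets (borel :: (real \<times> real) measure)
              \<and> emeasure \<pi> box01 = 1
              \<and> distr \<pi> borel fst = Fmeas \<alpha> \<and> distr \<pi> borel snd = Fmeas \<alpha>}"

definition indepF :: "real \<Rightarrow> (real \<times> real) measure" where
  "indepF \<alpha> = Fmeas \<alpha> \<Otimes>\<^sub>M Fmeas \<alpha>"

definition feasible :: "mechanism \<Rightarrow> bool" where
  "feasible M = (\<forall>v\<in>box01. 0 \<le> fst (fst M v) \<and> 0 \<le> snd (fst M v)
                  \<and> fst (fst M v) \<le> 1 \<and> snd (fst M v) \<le> 1
                  \<and> fst (fst M v) + snd (fst M v) \<le> 1)"

definition DSIC :: "mechanism \<Rightarrow> bool" where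
  "DSIC M = (\<forall>v1\<in>{0..1}. \<forall>v2\<in>{0..1}. \<forall>w\<in>{0..1}.
      v1 * fst (fst M (v1, v2)) - fst (snd M (v1, v2))
        \<ge> v1 * fst (fst M (w, v2)) - fst (snd M (w, v2))
    \<and> v2 * snd (fst M (v1, v2)) - snd (snd M (v1, v2))
        \<ge> v2 * snd (fst M (v1, w)) - snd (snd M (v1, w)))"

definition EPIR :: "mechanism \<Rightarrow> bool" where
  "EPIR M = (\<forall>v1\<in>{0..1}. \<forall>v2\<in>{0..1}.
      v1 * fst (fst M (v1, v2)) - fst (snd M (v1, v2)) \<ge> 0
    \<and> v2 * snd (fst M (v1, v2)) - snd (snd M (v1, v2)) \<ge> 0)"

definition revenue :: "mechanism \<Rightarrow> real \<times> real \<Rightarrow> real" where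
  "revenue M v = fst (snd M v) + snd (snd M v)"

definition U :: "mechanism \<Rightarrow> (real \<times> real) measure \<Rightarrow> real" where
  "U M \<pi> = (\<integral>v. revenue M v \<partial>\<pi>)"

definition SPA_UR :: mechanism where
  "SPA_UR = ((\<lambda>(v1, v2). if v1 > v2 then (v1, 0) else if v2 > v1 then (0, v2)
                         else (v1 / 2, v1 / 2)),
             (\<lambda>(v1, v2). if v1 > v2 then ((v1^2 + v2^2) / 2, 0)
                         else if v2 > v1 then (0, (v1^2 + v2^2) / 2)
                         else (v1^2 / 2, v1^2 / 2)))"

end

theory Submission
  imports Defs
begin

(* Under any \<pi> \<in> \<Pi>(F) the auction earns E[(v1^2 + v2^2)/2] = \<integral> x^2 dF, which depends only on
   the marginals; this gives the first claim with equality.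
   For the second, the equal revenue distribution has tail 1 - F(v) = \<alpha>/v on [\<alpha>,1), so its
   virtual value vanishes there: by the incentive constraints a bidder's expected payment is at most
   \<alpha> times the expected allocation it gets when reporting 1. We run this argument on the grid
   \<alpha> = s_0 < ... < s_n = 1 of mesh d: bounding the payment at a value in (s_k, s_(k+1)] by the payment
   at s_(k+1) and summing by parts gives expected payment at most (\<alpha> + d) E q_i(1, .). As the
   allocations at (1,1) sum to at most 1 and F has an atom of size \<alpha> at 1, the revenue of any
   mechanism under F \<times> F is at most (\<alpha> + d)(2 - \<alpha>), whereas \<integral> x^2 dF \<ge> 2\<alpha> - \<alpha>^2 - 2d.
   Letting d tend to 0 proves the claim. *)

lemma sets_Fmeas [simp, measurable_cong]: "sets (Fmeas \<alpha>) = sets borel"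
  by (simp add: Fmeas_def)

lemma sets_indepF: "sets (indepF \<alpha>) = sets (borel \<Otimes>\<^sub>M borel)"
  unfolding indepF_def by (rule sets_pair_measure_cong) simp_all

locale equal_revenue =
  fixes \<alpha> :: real
  assumes alpha_pos: "0 < \<alpha>" and alpha_less_1: "\<alpha> < 1"
begin

lemma Fcdf_mono: "x \<le> y \<Longrightarrow> Fcdf \<alpha> x \<le> Fcdf \<alpha> y"
  using alpha_pos alpha_less_1 by (auto simp: Fcdf_def field_simps frac_le)

lemma continuous_at_right_Fcdf: "continuous (at_right a) (Fcdf \<alpha>)"
proof -
  obtain g b where "a < b" and g: "\<And>x. x \<in> {a..<b} \<Longrightarrow> Fcdf \<alpha> x = g x"
    and "continuous (at_right a) g"
  proof -
    consider "a < \<alpha>" | "\<alpha> \<le> a" "a < 1" | "1 \<le> a" by linarith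
    then show ?thesis
    proof cases
      case 1
      then show ?thesis by (intro that[of \<alpha> "\<lambda>_. 0"]) (auto simp: Fcdf_def)
    next
      case 2
      then show ?thesis using alpha_pos
        by (intro that[of 1 "\<lambda>x. 1 - \<alpha> / x"]) (auto simp: Fcdf_def intro!: continuous_intros)
    next
      case 3
      then show ?thesis using alpha_less_1
        by (intro that[of "a + 1" "\<lambda>_. 1"]) (auto simp: Fcdf_def)
    qed
  qed
  moreover have "eventually (\<lambda>x. Fcdf \<alpha> x = g x) (at_right a)"
    using eventually_at_right_real[OF \<open>a < b\<close>] by eventually_elim (auto intro: g)
  ultimately show ?thesis
    using g[of a] by (simp add: continuous_within tendsto_cong)
qed

lemma Fcdf_at_bot: "(Fcdf \<alpha> \<longlongrightarrow> 0) at_bot"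
  by (rule tendsto_eventually) (auto simp: Fcdf_def eventually_at_bot_linorder intro!: exI[of _ "\<alpha> - 1"])

lemma Fcdf_at_top: "(Fcdf \<alpha> \<longlongrightarrow> 1) at_top"
  using alpha_less_1
  by (intro tendsto_eventually) (auto simp: Fcdf_def eventually_at_top_linorder intro!: exI[of _ 1])

sublocale F: real_distribution "Fmeas \<alpha>"
  unfolding Fmeas_def
  by (rule real_distribution_interval_measure[OF Fcdf_mono continuous_at_right_Fcdf Fcdf_at_bot Fcdf_at_top])

lemma measure_Fmeas_Ioc: "a \<le> b \<Longrightarrow> measure (Fmeas \<alpha>) {a<..b} = Fcdf \<alpha> b - Fcdf \<alpha> a"
  unfolding Fmeas_def by (rule measure_interval_measure_Ioc[OF _ Fcdf_mono continuous_at_right_Fcdf])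

lemma cdf_Fmeas: "cdf (Fmeas \<alpha>) = Fcdf \<alpha>"
  unfolding Fmeas_def by (rule cdf_interval_measure[OF Fcdf_mono continuous_at_right_Fcdf Fcdf_at_bot])

lemma measure_Fmeas_1: "measure (Fmeas \<alpha>) {1} = \<alpha>"
proof -
  have "((\<lambda>x. 1 - \<alpha> / x) \<longlongrightarrow> 1 - \<alpha>) (at_left 1)"
    by (auto intro!: tendsto_eq_intros)
  moreover have "eventually (\<lambda>x. 1 - \<alpha> / x = Fcdf \<alpha> x) (at_left 1)"
    using eventually_at_left_real[OF alpha_less_1] by eventually_elim (auto simp: Fcdf_def)
  ultimately have "(Fcdf \<alpha> \<longlongrightarrow> 1 - \<alpha>) (at_left 1)"
    by (rule Lim_transform_eventually)
  then have "measure (Fmeas \<alpha>) {..<1} = 1 - \<alpha>"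
    using F.cdf_at_left[of 1] by (simp add: cdf_Fmeas) (metis tendsto_unique trivial_limit_at_left_real)
  moreover have "measure (Fmeas \<alpha>) {..1} = 1"
    using cdf_Fmeas alpha_less_1 by (simp add: cdf_def fun_eq_iff Fcdf_def)
  moreover have "measure (Fmeas \<alpha>) ({..1} - {..<1}) = measure (Fmeas \<alpha>) {..1} - measure (Fmeas \<alpha>) {..<1}"
    by (rule F.finite_measure_Diff) auto
  moreover have "{..1} - {..<1} = {1::real}"
    by auto
  ultimately show ?thesis
    by simp
qed

lemma AE_Fmeas: "AE x in Fmeas \<alpha>. x \<in> {\<alpha><..1}"
  using alpha_pos alpha_less_1
  by (intro F.AE_prob_1) (simp add: measure_Fmeas_Ioc Fcdf_def)

sublocale P: pair_prob_space "Fmeas \<alpha>" "Fmeas \<alpha>" ..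

lemma prob_space_indepF: "prob_space (indepF \<alpha>)"
  unfolding indepF_def by (rule P.prob_space_axioms)

lemma emeasure_indepF_Times:
  "A \<in> sets borel \<Longrightarrow> B \<in> sets borel \<Longrightarrow> emeasure (indepF \<alpha>) (A \<times> B) = emeasure (Fmeas \<alpha>) A * emeasure (Fmeas \<alpha>) B"
  unfolding indepF_def by (rule F.emeasure_pair_measure_Times) auto

lemma AE_indepF: "AE v in indepF \<alpha>. v \<in> {\<alpha><..1} \<times> {\<alpha><..1}"
proof (rule prob_space.AE_prob_1[OF prob_space_indepF])
  have "emeasure (Fmeas \<alpha>) {\<alpha><..1} = 1"
    using AE_Fmeas by (simp add: F.prob_eq_1 F.emeasure_eq_measure)
  then have "emeasure (indepF \<alpha>) ({\<alpha><..1} \<times> {\<alpha><..1}) = 1"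
    by (simp add: emeasure_indepF_Times)
  then show "measure (indepF \<alpha>) ({\<alpha><..1} \<times> {\<alpha><..1}) = 1"
    by (simp add: measure_def)
qed

lemma indepF_in_PiF: "indepF \<alpha> \<in> PiF \<alpha>"
proof -
  have sets: "sets (indepF \<alpha>) = sets (borel :: (real \<times> real) measure)"
    unfolding sets_indepF borel_prod ..
  have "emeasure (Fmeas \<alpha>) {0..1} = 1"
    using AE_Fmeas alpha_pos by (auto simp: F.prob_eq_1 F.emeasure_eq_measure elim!: eventually_mono)
  then have box: "emeasure (indepF \<alpha>) box01 = 1"
    by (simp add: box01_def emeasure_indepF_Times)
  have fst: "distr (indepF \<alpha>) borel fst = Fmeas \<alpha>"
    using F.distr_pair_fst[of "Fmeas \<alpha>"] unfolding indepF_def by (simp cong: distr_cong)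
  have "distr (indepF \<alpha>) borel snd
      = distr (distr (indepF \<alpha>) (indepF \<alpha>) (\<lambda>(x, y). (y, x))) borel snd"
    unfolding indepF_def by (subst P.distr_pair_swap) simp
  also have "\<dots> = distr (indepF \<alpha>) borel fst"
    by (subst distr_distr) (auto simp: indepF_def comp_def case_prod_beta cong: distr_cong)
  finally have snd: "distr (indepF \<alpha>) borel snd = Fmeas \<alpha>"
    using fst by simp
  show ?thesis
    using prob_space_indepF sets box fst snd by (simp add: PiF_def)
qed

end

lemma revenue_SPA_UR: "revenue SPA_UR v = (fst v ^ 2 + snd v ^ 2) / 2"
  by (cases v) (auto simp: revenue_def SPA_UR_def power2_eq_square)

lemma U_SPA_UR_PiF:
  assumes "\<pi> \<in> PiF \<alpha>"
  shows "U SPA_UR \<pi> = (\<integral>x. x\<^sup>2 \<partial>Fmeas \<alpha>)"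
proof -
  interpret prob_space \<pi>
    using assms by (simp add: PiF_def)
  have [measurable_cong]: "sets \<pi> = sets (borel \<Otimes>\<^sub>M borel)"
    using assms unfolding borel_prod by (simp add: PiF_def)
  have "prob box01 = 1"
    using assms by (simp add: PiF_def emeasure_eq_measure)
  then have box: "AE v in \<pi>. v \<in> box01"
    by (rule AE_prob_1)
  have marginal: "(\<integral>v. (f v)\<^sup>2 \<partial>\<pi>) = (\<integral>x. x\<^sup>2 \<partial>Fmeas \<alpha>)"
    and integrable: "integrable \<pi> (\<lambda>v. (f v)\<^sup>2)"
    if "f = fst \<or> f = snd" for f :: "real \<times> real \<Rightarrow> real"
  proof -
    have [measurable]: "f \<in> borel_measurable \<pi>"
      using that by auto
    have "distr \<pi> borel f = Fmeas \<alpha>"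
      using that assms by (auto simp: PiF_def)
    then show "(\<integral>v. (f v)\<^sup>2 \<partial>\<pi>) = (\<integral>x. x\<^sup>2 \<partial>Fmeas \<alpha>)"
      using integral_distr[of f \<pi> borel "\<lambda>x. x\<^sup>2"] by simp
    show "integrable \<pi> (\<lambda>v. (f v)\<^sup>2)"
      by (rule integrable_const_bound[where B=1])
        (use box that in \<open>auto simp: box01_def abs_le_square_iff power_le_one\<close>)
  qed
  have "U SPA_UR \<pi> = ((\<integral>v. (fst v)\<^sup>2 \<partial>\<pi>) + (\<integral>v. (snd v)\<^sup>2 \<partial>\<pi>)) / 2"
    using integrable[of fst] integrable[of snd] by (simp add: U_def revenue_SPA_UR)
  then show ?thesis
    using marginal[of fst] marginal[of snd] by simp
qed

lemma sum_by_parts_cdf: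
  fixes F T :: "nat \<Rightarrow> real"
  assumes "F 0 = 0" and "F n = 1"
  shows "(\<Sum>k<n. (F (Suc k) - F k) * T (Suc k)) = T 0 + (\<Sum>k<n. (1 - F k) * (T (Suc k) - T k))"
proof -
  have "(\<Sum>k<n. (F (Suc k) - F k) * T (Suc k)) = F n * T n - F 0 * T 0 - (\<Sum>k<n. F k * (T (Suc k) - T k))"
    by (induction n) (simp_all add: algebra_simps)
  moreover have "(\<Sum>k<n. (1 - F k) * (T (Suc k) - T k)) = T n - T 0 - (\<Sum>k<n. F k * (T (Suc k) - T k))"
    using sum_lessThan_telescope[of T n] by (simp add: left_diff_distrib sum_subtractf)
  ultimately show ?thesis
    using assms by simp
qed

locale equal_revenue_grid = equal_revenue +
  fixes n :: nat
  assumes n_pos: "0 < n"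
begin

definition mesh :: real where
  "mesh = (1 - \<alpha>) / n"

definition grid :: "nat \<Rightarrow> real" where
  "grid k = \<alpha> + k * mesh"

definition cell :: "nat \<Rightarrow> real set" where
  "cell k = {grid k <.. grid (Suc k)}"

lemma mesh_pos: "0 < mesh"
  using alpha_less_1 n_pos by (simp add: mesh_def)

lemma grid_0 [simp]: "grid 0 = \<alpha>"
  by (simp add: grid_def)

lemma grid_n [simp]: "grid n = 1"
  using n_pos by (simp add: grid_def mesh_def)

lemma grid_Suc: "grid (Suc k) = grid k + mesh"
  by (simp add: grid_def algebra_simps)

lemma grid_mono: "j \<le> k \<Longrightarrow> grid j \<le> grid k"
  using mesh_pos by (simp add: grid_def mult_right_mono)

lemma alpha_le_grid: "\<alpha> \<le> grid k"
  using grid_mono[of 0 k] by simp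

lemma grid_le_1: "k \<le> n \<Longrightarrow> grid k \<le> 1"
  using grid_mono[of k n] by simp

lemma grid_in_unit: "k \<le> n \<Longrightarrow> grid k \<in> {0..1}"
  using alpha_le_grid[of k] grid_le_1[of k] alpha_pos by simp

lemma tail_Fcdf_grid: "k < n \<Longrightarrow> 1 - Fcdf \<alpha> (grid k) = \<alpha> / grid k"
  using alpha_le_grid[of k] grid_le_1[of "Suc k"] mesh_pos by (simp add: Fcdf_def grid_Suc)

lemma grid_ratio_le: "\<alpha> / grid k * grid (Suc k) \<le> \<alpha> + mesh"
proof -
  have "0 < grid k"
    using alpha_le_grid[of k] alpha_pos by simp
  then have "\<alpha> / grid k * grid (Suc k) = \<alpha> + mesh * (\<alpha> / grid k)"
    by (simp add: grid_Suc field_simps)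
  also have "\<dots> \<le> \<alpha> + mesh * 1"
    using \<open>0 < grid k\<close> alpha_le_grid[of k] alpha_pos mesh_pos by (intro add_left_mono mult_left_mono) auto
  finally show ?thesis
    by simp
qed

lemma Fcdf_grid_0: "Fcdf \<alpha> (grid 0) = 0"
  using alpha_pos alpha_less_1 by (simp add: Fcdf_def)

lemma Fcdf_grid_n: "Fcdf \<alpha> (grid n) = 1"
  using alpha_less_1 by (simp add: Fcdf_def)

lemma mem_cell_iff: "x \<in> cell k \<longleftrightarrow> \<lceil>(x - \<alpha>) / mesh\<rceil> = int k + 1"
proof -
  have "x \<in> cell k \<longleftrightarrow> k * mesh < x - \<alpha> \<and> x - \<alpha> \<le> (k + 1) * mesh"
    by (auto simp: cell_def grid_def algebra_simps)
  also have "\<dots> \<longleftrightarrow> k < (x - \<alpha>) / mesh \<and> (x - \<alpha>) / mesh \<le> k + 1"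
    using mesh_pos by (simp add: pos_less_divide_eq pos_divide_le_eq)
  finally show ?thesis
    by (simp add: ceiling_eq_iff add.commute)
qed

lemma sum_cells:
  assumes "x \<in> {\<alpha><..1}"
  obtains k where "k < n" and "x \<in> cell k" and "\<And>g. (\<Sum>j<n. indicator (cell j) x * g j) = (g k :: real)"
proof -
  define k where "k = nat \<lceil>(x - \<alpha>) / mesh\<rceil> - 1"
  have "0 < (x - \<alpha>) / mesh" and "(x - \<alpha>) / mesh \<le> n"
    using assms mesh_pos n_pos by (auto simp: mesh_def field_simps)
  then have "1 \<le> \<lceil>(x - \<alpha>) / mesh\<rceil>" and "\<lceil>(x - \<alpha>) / mesh\<rceil> \<le> n"
    by (simp_all add: ceiling_le_iff)
  then have "k < n" and cell: "\<And>j. x \<in> cell j \<longleftrightarrow> j = k"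
    unfolding mem_cell_iff k_def by linarith+
  moreover have "(\<Sum>j<n. indicator (cell j) x * g j) = g k" for g :: "nat \<Rightarrow> real"
    using \<open>k < n\<close> by (simp add: cell indicator_def if_distrib sum.delta cong: if_cong)
  ultimately show ?thesis
    using that by blast
qed

lemma integral_step_function:
  "(\<integral>x. (\<Sum>j<n. indicator (cell j) x * c j) \<partial>Fmeas \<alpha>)
     = (\<Sum>j<n. (Fcdf \<alpha> (grid (Suc j)) - Fcdf \<alpha> (grid j)) * c j)"
proof -
  have "measure (Fmeas \<alpha>) (cell j) = Fcdf \<alpha> (grid (Suc j)) - Fcdf \<alpha> (grid j)" for j
    unfolding cell_def by (rule measure_Fmeas_Ioc) (simp add: grid_mono)
  moreover have "integrable (Fmeas \<alpha>) (\<lambda>x. indicator (cell j) x * c j)" for j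
    by (intro integrable_mult_left integrable_real_indicator) (auto simp: cell_def F.emeasure_eq_measure)
  ultimately show ?thesis
    by (subst Bochner_Integration.integral_sum) auto
qed

lemma tail_weighted_square_increment_ge:
  assumes "k < n"
  shows "2 * \<alpha> * mesh \<le> (1 - Fcdf \<alpha> (grid k)) * ((grid (Suc k))\<^sup>2 - (grid k)\<^sup>2)"
proof -
  have "0 < grid k"
    using alpha_le_grid[of k] alpha_pos by simp
  have "(grid (Suc k))\<^sup>2 - (grid k)\<^sup>2 = mesh * (2 * grid k + mesh)"
    by (simp add: grid_Suc power2_eq_square algebra_simps)
  then have "(1 - Fcdf \<alpha> (grid k)) * ((grid (Suc k))\<^sup>2 - (grid k)\<^sup>2) = \<alpha> / grid k * (mesh * (2 * grid k + mesh))"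
    by (simp only: tail_Fcdf_grid[OF assms])
  also have "\<dots> = 2 * \<alpha> * mesh + \<alpha> * mesh\<^sup>2 / grid k"
    using \<open>0 < grid k\<close> by (simp add: field_simps power2_eq_square)
  finally show ?thesis
    using \<open>0 < grid k\<close> alpha_pos by simp
qed

lemma square_ge_on_cell:
  assumes "k < n" and "x \<in> cell k"
  shows "(grid (Suc k))\<^sup>2 - 2 * mesh \<le> x\<^sup>2"
proof -
  have "0 \<le> grid k" "grid k \<le> x" "grid (Suc k) \<le> 1"
    using assms alpha_le_grid[of k] alpha_pos grid_le_1[of "Suc k"] by (auto simp: cell_def)
  have "(grid (Suc k))\<^sup>2 = (grid k)\<^sup>2 + mesh * (2 * grid k + mesh)"
    by (simp add: grid_Suc power2_eq_square algebra_simps)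
  moreover have "mesh * (2 * grid k + mesh) \<le> mesh * 2"
    using \<open>grid (Suc k) \<le> 1\<close> \<open>0 \<le> grid k\<close> mesh_pos by (intro mult_left_mono) (auto simp: grid_Suc)
  moreover have "(grid k)\<^sup>2 \<le> x\<^sup>2"
    using \<open>grid k \<le> x\<close> \<open>0 \<le> grid k\<close> by (rule power_mono)
  ultimately show ?thesis
    by linarith
qed

lemma integral_square_ge: "2 * \<alpha> - \<alpha>\<^sup>2 - 2 * mesh \<le> (\<integral>x. x\<^sup>2 \<partial>Fmeas \<alpha>)"
proof -
  define T where "T k = (grid k)\<^sup>2 - 2 * mesh" for k
  have "2 * \<alpha> - \<alpha>\<^sup>2 - 2 * mesh = T 0 + n * (2 * \<alpha> * mesh)"
    using n_pos by (simp add: T_def mesh_def field_simps power2_eq_square)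
  also have "\<dots> \<le> T 0 + (\<Sum>k<n. (1 - Fcdf \<alpha> (grid k)) * (T (Suc k) - T k))"
    using sum_mono[of "{..<n}" "\<lambda>_. 2 * \<alpha> * mesh"] tail_weighted_square_increment_ge by (simp add: T_def)
  also have "\<dots> = (\<Sum>k<n. (Fcdf \<alpha> (grid (Suc k)) - Fcdf \<alpha> (grid k)) * T (Suc k))"
    by (rule sum_by_parts_cdf[symmetric]) (rule Fcdf_grid_0, rule Fcdf_grid_n)
  also have "\<dots> = (\<integral>x. (\<Sum>j<n. indicator (cell j) x * T (Suc j)) \<partial>Fmeas \<alpha>)"
    by (rule integral_step_function[symmetric])
  also have "\<dots> \<le> (\<integral>x. x\<^sup>2 \<partial>Fmeas \<alpha>)"
  proof (rule integral_mono_AE)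
    show "integrable (Fmeas \<alpha>) (\<lambda>x. \<Sum>j<n. indicator (cell j) x * T (Suc j))"
      by (intro Bochner_Integration.integrable_sum integrable_mult_left integrable_real_indicator)
        (auto simp: cell_def F.emeasure_eq_measure)
    show "integrable (Fmeas \<alpha>) (\<lambda>x. x\<^sup>2)"
    proof (rule F.integrable_const_bound[where B=1])
      show "AE x in Fmeas \<alpha>. norm (x\<^sup>2) \<le> 1"
        using AE_Fmeas by eventually_elim (use alpha_pos in \<open>auto simp: abs_le_square_iff power_le_one\<close>)
    qed simp
    show "AE x in Fmeas \<alpha>. (\<Sum>j<n. indicator (cell j) x * T (Suc j)) \<le> x\<^sup>2"
      using AE_Fmeas
    proof eventually_elim
      case (elim x)
      obtain k where "k < n" "x \<in> cell k" and "\<And>g. (\<Sum>j<n. indicator (cell j) x * g j) = (g k :: real)"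
        using sum_cells[OF elim] by blast
      then show ?case
        using square_ge_on_cell by (simp add: T_def)
    qed
  qed
  finally show ?thesis .
qed

end

(* q x z and t x z are the allocation and payment of one bidder with value x when the other bidder
   has value z; for the second bidder of a mechanism the arguments are swapped. *)
locale bidder =
  fixes q t :: "real \<Rightarrow> real \<Rightarrow> real"
  assumes allocation_bounds: "x \<in> {0..1} \<Longrightarrow> z \<in> {0..1} \<Longrightarrow> 0 \<le> q x z \<and> q x z \<le> 1"
    and truthful: "x \<in> {0..1} \<Longrightarrow> y \<in> {0..1} \<Longrightarrow> z \<in> {0..1} \<Longrightarrow> y * q x z - t x z \<le> y * q y z - t y z"
    and individually_rational: "x \<in> {0..1} \<Longrightarrow> z \<in> {0..1} \<Longrightarrow> t x z \<le> x * q x z"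
begin

lemma payment_increment_le:
  "x \<in> {0..1} \<Longrightarrow> y \<in> {0..1} \<Longrightarrow> z \<in> {0..1} \<Longrightarrow> t y z - t x z \<le> y * (q y z - q x z)"
  using truthful[of x y z] by (simp add: algebra_simps)

lemma allocation_mono:
  assumes "x \<in> {0..1}" "y \<in> {0..1}" "z \<in> {0..1}" and "x \<le> y"
  shows "q x z \<le> q y z"
proof -
  have "0 \<le> (y - x) * (q y z - q x z)"
    using payment_increment_le[of x y z] payment_increment_le[of y x z] assms by (simp add: algebra_simps)
  then show ?thesis
    using assms by (cases "x = y") (auto simp: zero_le_mult_iff)
qed

lemma payment_mono:
  assumes "x \<in> {0..1}" "y \<in> {0..1}" "z \<in> {0..1}" and "x \<le> y"
  shows "t x z \<le> t y z"
proof -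
  have "0 \<le> x * (q y z - q x z)"
    using allocation_mono[OF assms] assms by simp
  then show ?thesis
    using payment_increment_le[of y x z] assms by (simp add: algebra_simps)
qed

lemma payment_at_0_nonpos: "z \<in> {0..1} \<Longrightarrow> t 0 z \<le> 0"
  using individually_rational[of 0 z] by simp

end

lemma bidder_fst:
  assumes "feasible M" "DSIC M" "EPIR M"
  shows "bidder (\<lambda>x z. fst (fst M (x, z))) (\<lambda>x z. fst (snd M (x, z)))"
  using assms by unfold_locales (auto simp: feasible_def DSIC_def EPIR_def box01_def)

lemma bidder_snd:
  assumes "feasible M" "DSIC M" "EPIR M"
  shows "bidder (\<lambda>x z. snd (fst M (z, x))) (\<lambda>x z. snd (snd M (z, x)))"
  using assms by unfold_locales (auto simp: feasible_def DSIC_def EPIR_def box01_def)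

locale grid_bidder = equal_revenue_grid \<alpha> n + bidder q t
  for \<alpha> n q t +
  assumes payment_measurable: "a \<in> {0..1} \<Longrightarrow> t a \<in> borel_measurable (restrict_space borel {0..1})"
begin

definition step_payment :: "nat \<Rightarrow> real \<Rightarrow> real" where
  "step_payment j z = (if z \<in> {0..1} then t (grid (Suc j)) z - t 0 z else 0)"

(* The payments of a general mechanism need not be jointly measurable. This step function dominates
   t on (\<alpha>,1] \<times> [0,1] and involves t only through the sections t a at grid points. *)
definition payment_bound :: "real \<Rightarrow> real \<Rightarrow> real" where
  "payment_bound x z = (\<Sum>j<n. indicator (cell j) x * step_payment j z)"

lemma step_payment_bounds:
  assumes "j < n"
  shows "0 \<le> step_payment j z \<and> step_payment j z \<le> 1"
proof (cases "z \<in> {0..1}")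
  case True
  define a where "a = grid (Suc j)"
  have a: "a \<in> {0..1}"
    using assms grid_in_unit by (simp add: a_def)
  have "0 \<le> t a z - t 0 z"
    using payment_mono[of 0 a z] a True by simp
  moreover have "t a z - t 0 z \<le> a * (q a z - q 0 z)"
    using payment_increment_le[of 0 a z] a True by simp
  moreover have "a * (q a z - q 0 z) \<le> 1"
    using allocation_bounds[of a z] allocation_bounds[of 0 z] a True
    by (intro mult_le_one) (auto simp: allocation_mono)
  ultimately show ?thesis
    using True by (simp add: step_payment_def a_def)
qed (auto simp: step_payment_def)

lemma step_payment_measurable: "j < n \<Longrightarrow> step_payment j \<in> borel_measurable borel"
  unfolding step_payment_def
  by (subst measurable_restrict_space_iff[symmetric])
    (auto intro!: borel_measurable_diff payment_measurable grid_in_unit)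

lemma payment_bound_measurable: "(\<lambda>(x, z). payment_bound x z) \<in> borel_measurable (borel \<Otimes>\<^sub>M borel)"
  unfolding payment_bound_def case_prod_beta
proof (rule borel_measurable_sum)
  fix j assume "j \<in> {..<n}"
  then have [measurable]: "step_payment j \<in> borel_measurable borel"
    by (simp add: step_payment_measurable)
  have [measurable]: "cell j \<in> sets borel"
    by (simp add: cell_def)
  show "(\<lambda>v. indicator (cell j) (fst v) * step_payment j (snd v)) \<in> borel_measurable (borel \<Otimes>\<^sub>M borel)"
    by measurable
qed

lemma integrable_payment_bound: "integrable (indepF \<alpha>) (\<lambda>(x, z). payment_bound x z)"
proof -
  interpret prob_space "indepF \<alpha>"
    by (rule prob_space_indepF)
  have "\<bar>payment_bound x z\<bar> \<le> n" for x z
  proof -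
    have "\<bar>payment_bound x z\<bar> \<le> (\<Sum>j<n. \<bar>indicator (cell j) x * step_payment j z\<bar>)"
      unfolding payment_bound_def by (rule sum_abs)
    also have "\<dots> \<le> (\<Sum>j<n. 1)"
      using step_payment_bounds by (intro sum_mono) (auto simp: indicator_def)
    finally show ?thesis
      by simp
  qed
  moreover have "(\<lambda>(x, z). payment_bound x z) \<in> borel_measurable (indepF \<alpha>)"
    using payment_bound_measurable by (simp add: measurable_cong_sets[OF sets_indepF])
  ultimately show ?thesis
    by (intro integrable_const_bound[where B = n]) auto
qed

lemma payment_le_payment_bound:
  assumes "x \<in> {\<alpha><..1}" and "z \<in> {0..1}"
  shows "t x z \<le> payment_bound x z"
proof -
  obtain k where "k < n" "x \<in> cell k" and sum: "\<And>g. (\<Sum>j<n. indicator (cell j) x * g j) = (g k :: real)"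
    using sum_cells[OF assms(1)] by blast
  have "t x z \<le> t (grid (Suc k)) z"
    using \<open>k < n\<close> \<open>x \<in> cell k\<close> assms alpha_pos grid_in_unit[of "Suc k"]
    by (intro payment_mono) (auto simp: cell_def)
  then show ?thesis
    using payment_at_0_nonpos[OF assms(2)] assms(2) by (simp add: payment_bound_def sum step_payment_def)
qed

lemma tail_weighted_payment_increment_le:
  assumes "k < n" and "z \<in> {0..1}"
  shows "(1 - Fcdf \<alpha> (grid k)) * (t (grid (Suc k)) z - t (grid k) z)
    \<le> (\<alpha> + mesh) * (q (grid (Suc k)) z - q (grid k) z)"
proof -
  have unit: "grid k \<in> {0..1}" "grid (Suc k) \<in> {0..1}"
    using assms grid_in_unit by auto
  have "0 \<le> q (grid (Suc k)) z - q (grid k) z"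
    using allocation_mono[of "grid k" "grid (Suc k)" z] unit assms grid_mono[of k "Suc k"] by simp
  have "(1 - Fcdf \<alpha> (grid k)) * (t (grid (Suc k)) z - t (grid k) z)
      = \<alpha> / grid k * (t (grid (Suc k)) z - t (grid k) z)"
    using tail_Fcdf_grid[OF assms(1)] by simp
  also have "\<dots> \<le> \<alpha> / grid k * (grid (Suc k) * (q (grid (Suc k)) z - q (grid k) z))"
    using payment_increment_le[of "grid k" "grid (Suc k)" z] unit assms alpha_pos alpha_le_grid[of k]
    by (intro mult_left_mono) simp_all
  also have "\<dots> = \<alpha> / grid k * grid (Suc k) * (q (grid (Suc k)) z - q (grid k) z)"
    by simp
  also have "\<dots> \<le> (\<alpha> + mesh) * (q (grid (Suc k)) z - q (grid k) z)"
    using grid_ratio_le \<open>0 \<le> q (grid (Suc k)) z - q (grid k) z\<close> by (rule mult_right_mono)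
  finally show ?thesis .
qed

lemma sum_step_payment_le:
  assumes z: "z \<in> {0..1}"
  shows "(\<Sum>j<n. (Fcdf \<alpha> (grid (Suc j)) - Fcdf \<alpha> (grid j)) * step_payment j z) \<le> (\<alpha> + mesh) * q 1 z"
proof -
  define T where "T k = t (grid k) z - t 0 z" for k
  define Q where "Q k = q (grid k) z" for k
  have "T 0 \<le> \<alpha> * (q \<alpha> z - q 0 z)"
    using payment_increment_le[of 0 \<alpha> z] z alpha_pos alpha_less_1 by (simp add: T_def)
  also have "\<dots> \<le> (\<alpha> + mesh) * Q 0"
    using allocation_bounds[of 0 z] allocation_bounds[of \<alpha> z] z alpha_pos alpha_less_1 mesh_pos
    by (simp add: Q_def algebra_simps mult_left_mono)
  finally have "T 0 \<le> (\<alpha> + mesh) * Q 0" .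
  have "(\<Sum>j<n. (Fcdf \<alpha> (grid (Suc j)) - Fcdf \<alpha> (grid j)) * step_payment j z)
      = (\<Sum>j<n. (Fcdf \<alpha> (grid (Suc j)) - Fcdf \<alpha> (grid j)) * T (Suc j))"
    using z by (simp add: step_payment_def T_def)
  also have "\<dots> = T 0 + (\<Sum>k<n. (1 - Fcdf \<alpha> (grid k)) * (T (Suc k) - T k))"
    by (rule sum_by_parts_cdf[OF Fcdf_grid_0 Fcdf_grid_n])
  also have "\<dots> \<le> (\<alpha> + mesh) * Q 0 + (\<Sum>k<n. (\<alpha> + mesh) * (Q (Suc k) - Q k))"
    using \<open>T 0 \<le> (\<alpha> + mesh) * Q 0\<close> tail_weighted_payment_increment_le z
    by (intro add_mono sum_mono) (auto simp: T_def Q_def)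
  also have "\<dots> = (\<alpha> + mesh) * Q 0 + (\<alpha> + mesh) * (Q n - Q 0)"
    by (simp only: sum_distrib_left[symmetric] sum_lessThan_telescope)
  also have "\<dots> = (\<alpha> + mesh) * q 1 z"
    by (simp add: Q_def algebra_simps)
  finally show ?thesis .
qed

lemma sum_step_payment_le_atom:
  "(\<Sum>j<n. (Fcdf \<alpha> (grid (Suc j)) - Fcdf \<alpha> (grid j)) * step_payment j z)
    \<le> (\<alpha> + mesh) * (1 - (1 - q 1 1) * indicator {1} z)"
proof (cases "z \<in> {0..1}")
  case True
  then have "q 1 z \<le> 1 - (1 - q 1 1) * indicator {1} z"
    using allocation_bounds[of 1 z] by (auto simp: indicator_def)
  then have "(\<alpha> + mesh) * q 1 z \<le> (\<alpha> + mesh) * (1 - (1 - q 1 1) * indicator {1} z)"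
    using alpha_pos mesh_pos by (intro mult_left_mono) auto
  then show ?thesis
    using sum_step_payment_le[OF True] by linarith
next
  case False
  have "step_payment j z = 0" for j
    unfolding step_payment_def using False by (rule if_not_P)
  then show ?thesis
    using False alpha_pos mesh_pos by (auto simp: indicator_def)
qed

lemma integral_payment_bound_le:
  "integral\<^sup>L (indepF \<alpha>) (\<lambda>(x, z). payment_bound x z) \<le> (\<alpha> + mesh) * (1 - \<alpha> + \<alpha> * q 1 1)"
proof -
  define h where "h z = 1 - (1 - q 1 1) * indicator {1} z" for z :: real
  have "integral\<^sup>L (indepF \<alpha>) (\<lambda>(x, z). payment_bound x z) = (\<integral>z. (\<integral>x. payment_bound x z \<partial>Fmeas \<alpha>) \<partial>Fmeas \<alpha>)"
    using P.integral_snd[of payment_bound] integrable_payment_bound by (simp add: indepF_def)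
  also have "\<dots> = (\<integral>z. (\<Sum>j<n. (Fcdf \<alpha> (grid (Suc j)) - Fcdf \<alpha> (grid j)) * step_payment j z) \<partial>Fmeas \<alpha>)"
    by (simp only: payment_bound_def integral_step_function)
  also have "\<dots> \<le> (\<integral>z. (\<alpha> + mesh) * h z \<partial>Fmeas \<alpha>)"
  proof (rule integral_mono)
    show "integrable (Fmeas \<alpha>) (\<lambda>z. \<Sum>j<n. (Fcdf \<alpha> (grid (Suc j)) - Fcdf \<alpha> (grid j)) * step_payment j z)"
      using step_payment_bounds step_payment_measurable
      by (intro Bochner_Integration.integrable_sum integrable_mult_right F.integrable_const_bound[where B=1]) auto
    show "integrable (Fmeas \<alpha>) (\<lambda>z. (\<alpha> + mesh) * h z)"
      unfolding h_def
      by (intro integrable_mult_right Bochner_Integration.integrable_diff integrable_real_indicator)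
        (auto simp: F.emeasure_eq_measure)
  qed (simp add: h_def sum_step_payment_le_atom)
  also have "\<dots> = (\<alpha> + mesh) * (\<integral>z. h z \<partial>Fmeas \<alpha>)"
    by simp
  also have "(\<integral>z. h z \<partial>Fmeas \<alpha>) = 1 - \<alpha> + \<alpha> * q 1 1"
    unfolding h_def
    by (subst Bochner_Integration.integral_diff)
      (auto intro!: integrable_mult_right integrable_real_indicator
        simp: F.emeasure_eq_measure F.prob_space[simplified] measure_Fmeas_1 algebra_simps)
  finally show ?thesis .
qed

lemma integrable_payment_bound_swap: "integrable (indepF \<alpha>) (\<lambda>(x, z). payment_bound z x)"
  using P.integrable_product_swap[of "\<lambda>(x, z). payment_bound x z"] integrable_payment_bound
  by (simp add: indepF_def)

lemma integral_payment_bound_swap: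
  "integral\<^sup>L (indepF \<alpha>) (\<lambda>(x, z). payment_bound z x) = integral\<^sup>L (indepF \<alpha>) (\<lambda>(x, z). payment_bound x z)"
proof -
  have "(\<lambda>(x, z). payment_bound x z) \<in> borel_measurable (Fmeas \<alpha> \<Otimes>\<^sub>M Fmeas \<alpha>)"
    using borel_measurable_integrable[OF integrable_payment_bound] by (simp add: indepF_def)
  from P.integral_product_swap[OF this] show ?thesis
    by (simp add: indepF_def)
qed

end

context equal_revenue_grid
begin

lemma grid_bidders:
  assumes "feasible M" "DSIC M" "EPIR M" and revenue: "revenue M \<in> borel_measurable (borel \<Otimes>\<^sub>M borel)"
  shows "grid_bidder \<alpha> n (\<lambda>x z. fst (fst M (x, z))) (\<lambda>x z. fst (snd M (x, z)))"
    and "grid_bidder \<alpha> n (\<lambda>x z. snd (fst M (z, x))) (\<lambda>x z. snd (snd M (z, x)))"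
proof -
  interpret B1: bidder "\<lambda>x z. fst (fst M (x, z))" "\<lambda>x z. fst (snd M (x, z))"
    using assms(1-3) by (rule bidder_fst)
  interpret B2: bidder "\<lambda>x z. snd (fst M (z, x))" "\<lambda>x z. snd (snd M (z, x))"
    using assms(1-3) by (rule bidder_snd)
  have [measurable]: "revenue M \<in> borel_measurable (borel \<Otimes>\<^sub>M borel)"
    by (rule revenue)
  (* Each payment section is the revenue section minus the other bidder's payment, which is
     monotone in that bidder's own value. *)
  show "grid_bidder \<alpha> n (\<lambda>x z. fst (fst M (x, z))) (\<lambda>x z. fst (snd M (x, z)))"
  proof unfold_locales
    fix a :: real assume "a \<in> {0..1}"
    then have "mono_on {0..1} (\<lambda>z. snd (snd M (a, z)))"
      by (auto intro!: mono_onI B2.payment_mono)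
    then have "(\<lambda>z. revenue M (a, z) - snd (snd M (a, z))) \<in> borel_measurable (restrict_space borel {0..1})"
      by (intro borel_measurable_diff measurable_restrict_space1 borel_measurable_mono_on_fnc) measurable
    then show "(\<lambda>z. fst (snd M (a, z))) \<in> borel_measurable (restrict_space borel {0..1})"
      by (simp add: revenue_def)
  qed
  show "grid_bidder \<alpha> n (\<lambda>x z. snd (fst M (z, x))) (\<lambda>x z. snd (snd M (z, x)))"
  proof unfold_locales
    fix a :: real assume "a \<in> {0..1}"
    then have "mono_on {0..1} (\<lambda>z. fst (snd M (z, a)))"
      by (auto intro!: mono_onI B1.payment_mono)
    then have "(\<lambda>z. revenue M (z, a) - fst (snd M (z, a))) \<in> borel_measurable (restrict_space borel {0..1})"
      by (intro borel_measurable_diff measurable_restrict_space1 borel_measurable_mono_on_fnc) measurable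
    then show "(\<lambda>z. snd (snd M (z, a))) \<in> borel_measurable (restrict_space borel {0..1})"
      by (simp add: revenue_def)
  qed
qed

lemma U_le_mesh_bound:
  assumes "feasible M" "DSIC M" "EPIR M" and "integrable (indepF \<alpha>) (revenue M)"
  shows "U M (indepF \<alpha>) \<le> (\<alpha> + mesh) * (2 - \<alpha>)"
proof -
  have "revenue M \<in> borel_measurable (borel \<Otimes>\<^sub>M borel)"
    using borel_measurable_integrable[OF assms(4)] by (simp add: measurable_cong_sets[OF sets_indepF])
  note bidders = grid_bidders[OF assms(1-3) this]
  interpret B1: grid_bidder \<alpha> n "\<lambda>x z. fst (fst M (x, z))" "\<lambda>x z. fst (snd M (x, z))"
    by (rule bidders(1))
  interpret B2: grid_bidder \<alpha> n "\<lambda>x z. snd (fst M (z, x))" "\<lambda>x z. snd (snd M (z, x))"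
    by (rule bidders(2))
  have "U M (indepF \<alpha>) \<le> integral\<^sup>L (indepF \<alpha>) (\<lambda>(x, y). B1.payment_bound x y + B2.payment_bound y x)"
    unfolding U_def
  proof (rule integral_mono_AE)
    show "integrable (indepF \<alpha>) (\<lambda>(x, y). B1.payment_bound x y + B2.payment_bound y x)"
      using Bochner_Integration.integrable_add[OF B1.integrable_payment_bound B2.integrable_payment_bound_swap]
      by (simp add: case_prod_beta')
    show "AE v in indepF \<alpha>. revenue M v \<le> (\<lambda>(x, y). B1.payment_bound x y + B2.payment_bound y x) v"
      using AE_indepF
    proof eventually_elim
      case (elim v)
      then show ?case
        using B1.payment_le_payment_bound[of "fst v" "snd v"] B2.payment_le_payment_bound[of "snd v" "fst v"] alpha_pos
        by (auto simp: revenue_def case_prod_beta)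
    qed
  qed (rule assms(4))
  also have "\<dots> = integral\<^sup>L (indepF \<alpha>) (\<lambda>(x, y). B1.payment_bound x y) + integral\<^sup>L (indepF \<alpha>) (\<lambda>(x, y). B2.payment_bound x y)"
    using Bochner_Integration.integral_add[OF B1.integrable_payment_bound B2.integrable_payment_bound_swap] B2.integral_payment_bound_swap
    by (simp add: case_prod_beta')
  also have "\<dots> \<le> (\<alpha> + mesh) * (1 - \<alpha> + \<alpha> * fst (fst M (1, 1))) + (\<alpha> + mesh) * (1 - \<alpha> + \<alpha> * snd (fst M (1, 1)))"
    using B1.integral_payment_bound_le B2.integral_payment_bound_le by simp
  also have "\<dots> = (\<alpha> + mesh) * (2 - 2 * \<alpha> + \<alpha> * (fst (fst M (1, 1)) + snd (fst M (1, 1))))"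
    by (simp add: algebra_simps)
  also have "\<dots> \<le> (\<alpha> + mesh) * (2 - \<alpha>)"
  proof (rule mult_left_mono)
    have "fst (fst M (1, 1)) + snd (fst M (1, 1)) \<le> 1"
      using assms(1) by (auto simp: feasible_def box01_def)
    then show "2 - 2 * \<alpha> + \<alpha> * (fst (fst M (1, 1)) + snd (fst M (1, 1))) \<le> 2 - \<alpha>"
      using alpha_pos by (simp add: mult_left_le)
  qed (use alpha_pos mesh_pos in simp)
  finally show ?thesis .
qed

end

lemma (in equal_revenue) U_le_U_SPA_UR:
  assumes "feasible M" "DSIC M" "EPIR M" and "integrable (indepF \<alpha>) (revenue M)"
  shows "U M (indepF \<alpha>) \<le> U SPA_UR (indepF \<alpha>)"
proof (rule field_le_epsilon)
  fix e :: real assume "0 < e"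
  obtain n :: nat where n: "4 / e < n"
    using reals_Archimedean2 by blast
  moreover have "0 < 4 / e"
    using \<open>0 < e\<close> by simp
  ultimately have "0 < n"
    using of_nat_0_less_iff by fastforce
  then interpret equal_revenue_grid \<alpha> n
    by unfold_locales
  have "mesh < e / 4"
    using n \<open>0 < e\<close> \<open>0 < n\<close> alpha_pos by (simp add: mesh_def field_simps)
  moreover have "U M (indepF \<alpha>) \<le> (\<alpha> + mesh) * (2 - \<alpha>)"
    using assms by (rule U_le_mesh_bound)
  moreover have "2 * \<alpha> - \<alpha>\<^sup>2 - 2 * mesh \<le> U SPA_UR (indepF \<alpha>)"
    using integral_square_ge U_SPA_UR_PiF[OF indepF_in_PiF] by simp
  moreover have "(\<alpha> + mesh) * (2 - \<alpha>) \<le> 2 * \<alpha> - \<alpha>\<^sup>2 + 2 * mesh"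
    using alpha_pos mesh_pos by (simp add: algebra_simps power2_eq_square)
  ultimately show "U M (indepF \<alpha>) \<le> U SPA_UR (indepF \<alpha>) + e"
    by linarith
qed

theorem corollary1:
  fixes \<alpha> :: real
  assumes "0 < \<alpha>" and "\<alpha> < 1"
  shows "(\<forall>\<pi>\<in>PiF \<alpha>. U SPA_UR \<pi> \<ge> U SPA_UR (indepF \<alpha>))
       \<and> (\<forall>M::mechanism. feasible M \<and> DSIC M \<and> EPIR M
            \<and> integrable (indepF \<alpha>) (revenue M)
            \<longrightarrow> U M (indepF \<alpha>) \<le> U SPA_UR (indepF \<alpha>))"
proof -
  interpret equal_revenue \<alpha>
    using assms by unfold_locales
  have "U SPA_UR \<pi> = U SPA_UR (indepF \<alpha>)" if "\<pi> \<in> PiF \<alpha>" for \<pi>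
    using U_SPA_UR_PiF[OF that] U_SPA_UR_PiF[OF indepF_in_PiF] by simp
  then show ?thesis
    using U_le_U_SPA_UR by auto
qed

end
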